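(* There exists a map $C$ which assigns to every ZX-diagram $D:n\to m$ (for all $n,m\in\mathbb N$) a ZX-diagram $C(D):1\to n+m$ such that, for every ZX-diagram $D:n\to m$: (i) $C(D)$ is a controlled state, and (ii) $\llbracket C(D)\rrbracket\,|1\rangle=\lambda_{n,m}\,\mathrm{vec}(\llbracket D\rrbracket)$, where $\lambda_{n,m}\neq 0$ is a complex scalar depending only on $n$ and $m$ (not on $D$). Moreover $C$ can be chosen compositional: $C(D)$ is defined by induction on the structure of $D$, with $C(D_2\otimes D_1)$ built only from $C(D_1)$ and $C(D_2)$, and $C(D_3\circ D_1)$ built only from $C(D_1)$ and $C(D_3)$, together with fixed constant diagrams.
   Context: ZX-diagrams $D:n\to m$ are built from the generators: green spiders $Z^{\alpha}_{n,m}$ and red spiders $X^{\alpha}_{n,m}$ ($n$ inputs, $m$ outputs, angle $\alpha\in\mathbb R/2\pi\mathbb Z$), the Hadamard $H:1\to1$, identity $1\to 1$, swap $2\to2$, cup $2\to0$, cap $0\to2$ and the empty diagram $0\to0$, closed under sequential composition $\circ$ and tensor product $\otimes$. The standard interpretation $\llbracket D\rrbracket\in\mathcal M_{2^m,2^n}(\mathbb C)$ is the functor with $\llbracket Z^\alpha_{n,m}\rrbracket=|0\rangle^{\otimes m}\langle0|^{\otimes n}+e^{i\alpha}|1\rangle^{\otimes m}\langle1|^{\otimes n}$, $\llbracket X^\alpha_{n,m}\rrbracket=|+\rangle^{\otimes m}\langle+|^{\otimes n}+e^{i\alpha}|-\rangle^{\otimes m}\langle-|^{\otimes n}$, $\llbracket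 H\rrbracket=|+\rangle\langle0|+|-\rangle\langle1|$, cup $\mapsto\langle00|+\langle11|$, cap $\mapsto|00\rangle+|11\rangle$, swap $\mapsto\sum_{i,j}|ij\rangle\langle ji|$, identity and empty diagram mapped to the identity and to $1$, with $\llbracket D_1\circ D_0\rrbracket=\llbracket D_1\rrbracket\llbracket D_0\rrbracket$ and $\llbracket D_0\otimes D_2\rrbracket=\llbracket D_0\rrbracket\otimes\llbracket D_2\rrbracket$; here $|\pm\rangle=(|0\rangle\pm|1\rangle)/\sqrt2$. A ZX-diagram $D:1\to k$ is a controlled state if $\llbracket D\rrbracket|0\rangle=\sum_{x\in\{0,1\}^k}|x\rangle$. For a linear map $M:\mathbb C^{2^n}\to\mathbb C^{2^m}$ let $\mathrm{vec}(M)=\sum_{x\in\{0,1\}^n}|x\rangle\otimes M|x\rangle\in\mathbb C^{2^{n+m}}$ (so $M$ is recovered from $\mathrm{vec}(M)$ by bending the first $n$ wires into inputs with cups). A map $C$ satisfying (i) and (ii) is called a controlizer. *)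

theory Defs
  imports Complex_Main
begin

text \<open>Comp D1 D0 is the sequential composition D1 after D0;
  Tens D0 D2 is the tensor product (D0 on the first wires).
  Angles are real numbers; the semantics only depends on them modulo 2 pi.\<close>

datatype zx =
    ZS nat nat real
  | XS nat nat real
  | Had | Wire | Swap | Cup | Cap | Emp
  | Comp zx zx
  | Tens zx zx

fun ins :: "zx \<Rightarrow> nat" where
  "ins (ZS n m a) = n"
| "ins (XS n m a) = n"
| "ins Had = 1"
| "ins Wire = 1"
| "ins Swap = 2"
| "ins Cup = 2"
| "ins Cap = 0"
| "ins Emp = 0"
| "ins (Comp D1 D0) = ins D0"
| "ins (Tens D0 D2) = ins D0 + ins D2"

fun outs :: "zx \<Rightarrow> nat" where
  "outs (ZS n m a) = m"
| "outs (XS n m a) = m"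
| "outs Had = 1"
| "outs Wire = 1"
| "outs Swap = 2"
| "outs Cup = 0"
| "outs Cap = 2"
| "outs Emp = 0"
| "outs (Comp D1 D0) = outs D1"
| "outs (Tens D0 D2) = outs D0 + outs D2"

fun wf :: "zx \<Rightarrow> bool" where
  "wf (Comp D1 D0) = (wf D1 \<and> wf D0 \<and> outs D0 = ins D1)"
| "wf (Tens D0 D2) = (wf D0 \<and> wf D2)"
| "wf _ = True"

definition bits :: "nat \<Rightarrow> bool list set" where
  "bits k = {x. length x = k}"

definition nones :: "bool list \<Rightarrow> nat" where
  "nones x = length (filter id x)"

text \<open>Standard interpretation, given by matrix entries: sem D y x = <y| [[D]] |x>,
  where a basis vector |x> of (C^2)^{\<otimes>k} is indexed by a bit list x of length k
  (first list element = first tensor factor).\<close>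
fun sem :: "zx \<Rightarrow> bool list \<Rightarrow> bool list \<Rightarrow> complex" where
  "sem (ZS n m a) y x =
     (if (\<forall>b\<in>set y. \<not> b) \<and> (\<forall>b\<in>set x. \<not> b) then 1 else 0)
   + (if (\<forall>b\<in>set y. b) \<and> (\<forall>b\<in>set x. b) then exp (\<i> * complex_of_real a) else 0)"
| "sem (XS n m a) y x =
     complex_of_real ((1 / sqrt 2) ^ (n + m)) *
       (1 + exp (\<i> * complex_of_real a) * (-1) ^ (nones y + nones x))"
| "sem Had y x = (if y = [True] \<and> x = [True] then - complex_of_real (1 / sqrt 2)
                  else complex_of_real (1 / sqrt 2))"
| "sem Wire y x = (if y = x then 1 else 0)"
| "sem Swap y x = (if y = rev x then 1 else 0)"
| "sem Cup y x = (if y = [] \<and> (x = [False, False] \<or> x = [True, True]) then 1 else 0)"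
| "sem Cap y x = (if x = [] \<and> (y = [False, False] \<or> y = [True, True]) then 1 else 0)"
| "sem Emp y x = (if y = [] \<and> x = [] then 1 else 0)"
| "sem (Comp D1 D0) y x = (\<Sum>z\<in>bits (outs D0). sem D1 y z * sem D0 z x)"
| "sem (Tens D0 D2) y x =
     sem D0 (take (outs D0) y) (take (ins D0) x) * sem D2 (drop (outs D0) y) (drop (ins D0) x)"

definition controlled_state :: "zx \<Rightarrow> bool" where
  "controlled_state D \<longleftrightarrow> wf D \<and> ins D = 1 \<and>
     (\<forall>y. length y = outs D \<longrightarrow> sem D y [False] = 1)"

fun wires :: "nat \<Rightarrow> zx" where
  "wires 0 = Emp"
| "wires (Suc r) = Tens Wire (wires r)"

end

theory Submission
  imports Defs
begin

text \<open>For a tensor product a Z-spider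
  copies the control into the controlized factors and a block swap brings the outputs into the
  order inputs-then-outputs; for a composition the control is copied in the same way and the
  shared wires are contracted by cups of weight 1/2 each. The weights make the control-0 branch
  (the all-ones vector) stable, and the control-1 branch becomes the tensor product, respectively
  the matrix product, with the multiplicative scalar sqrt 2 ^ (n + m).

  At the leaves, X-spiders are controlized by a "fan": the control passes through a triangle and
  a Z-phase, is copied onto all legs and each leg gets a scaled Hadamard, so that control 0 gives
  the all-ones vector and control 1 gives the parity pattern of the X-spider. Wires, cups and caps
  are X-spiders semantically, the Hadamard gets a similar fan, a Z-spider is the X-spider
  conjugated by Hadamards and is handled by the recursive construction, and the swap permutes
  the outputs of the controlizer of two parallel wires. Arbitrary scalars, effects and diagonal
  maps, needed for the triangle, are all expressible by diagrams.\<close>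

section \<open>Sums over bit lists\<close>

lemma bits_0 [simp]: "bits 0 = {[]}"
  by (auto simp: bits_def)

lemma bits_Suc: "bits (Suc n) = Cons False ` bits n \<union> Cons True ` bits n"
  by (auto simp: bits_def image_iff length_Suc_conv)

lemma finite_bits [simp]: "finite (bits n)"
  by (induction n) (auto simp: bits_Suc)

lemma mem_bits [simp]: "x \<in> bits n \<longleftrightarrow> length x = n"
  by (simp add: bits_def)

lemma card_bits: "card (bits n) = 2 ^ n"
proof (induction n)
  case (Suc n)
  have "card (bits (Suc n)) = card (Cons False ` bits n) + card (Cons True ` bits n)"
    unfolding bits_Suc by (rule card_Un_disjoint) auto
  also have "\<dots> = 2 * card (bits n)"
    by (simp add: card_image)
  finally show ?case
    using Suc by simp
qed simp

lemma sum_bits_Suc: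
  "(\<Sum>z\<in>bits (Suc n). f z) = (\<Sum>z\<in>bits n. f (False # z)) + (\<Sum>z\<in>bits n. f (True # z))"
  unfolding bits_Suc by (subst sum.union_disjoint) (auto simp: sum.reindex)

lemma sum_bits_one: "(\<Sum>z\<in>bits (Suc 0). f z) = f [False] + f [True]"
  by (simp add: sum_bits_Suc)

lemma sum_bits_two:
  "(\<Sum>z\<in>bits 2. f z) = f [False, False] + f [False, True] + f [True, False] + f [True, True]"
  by (simp add: numeral_2_eq_2 sum_bits_Suc add.assoc)

lemma sum_bits_add: "(\<Sum>z\<in>bits (a + b). f z) = (\<Sum>u\<in>bits a. \<Sum>v\<in>bits b. f (u @ v))"
proof (induction a arbitrary: f)
  case (Suc a)
  then show ?case
    by (simp add: sum_bits_Suc)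
qed simp

lemma sum_bits_delta: "length v = k \<Longrightarrow> (\<Sum>u\<in>bits k. if u = v then f u else 0) = f v"
  by (simp add: sum.delta)

lemma append_split_length:
  "length x = a + b \<Longrightarrow> \<exists>x1 x2. x = x1 @ x2 \<and> length x1 = a \<and> length x2 = b"
  by (rule exI[of _ "take a x"], rule exI[of _ "drop a x"]) simp

lemma sem_Comp_one_wire:
  "outs B = 1 \<Longrightarrow>
     sem (Comp A B) y x = sem A y [False] * sem B [False] x + sem A y [True] * sem B [True] x"
  by (simp add: sum_bits_one)

section \<open>Permutation diagrams\<close>

definition perm_diagram :: "zx \<Rightarrow> (bool list \<Rightarrow> bool list) \<Rightarrow> bool" where
  "perm_diagram P g \<longleftrightarrow> wf P \<and> (\<forall>x. length x = ins P \<longrightarrow> length (g x) = outs P) \<and>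
     (\<forall>x y. length x = ins P \<longrightarrow> length y = outs P \<longrightarrow> sem P y x = (if y = g x then 1 else 0))"

lemma perm_diagram_cong:
  "perm_diagram P g \<Longrightarrow> (\<And>x. length x = ins P \<Longrightarrow> g x = g' x) \<Longrightarrow> perm_diagram P g'"
  unfolding perm_diagram_def by metis

lemma perm_diagram_Wire: "perm_diagram Wire id"
  by (auto simp: perm_diagram_def)

lemma perm_diagram_Emp: "perm_diagram Emp id"
  by (auto simp: perm_diagram_def)

lemma perm_diagram_Swap: "perm_diagram Swap rev"
  by (auto simp: perm_diagram_def)

lemma perm_diagram_Tens:
  assumes A: "perm_diagram A f" and B: "perm_diagram B g"
  shows "perm_diagram (Tens A B) (\<lambda>x. f (take (ins A) x) @ g (drop (ins A) x))"
  unfolding perm_diagram_def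
proof (intro conjI allI impI)
  note fA = A[unfolded perm_diagram_def] and gB = B[unfolded perm_diagram_def]
  show "wf (Tens A B)"
    using fA gB by simp
  fix x :: "bool list"
  assume x: "length x = ins (Tens A B)"
  then show "length (f (take (ins A) x) @ g (drop (ins A) x)) = outs (Tens A B)"
    using fA gB by simp
  fix y :: "bool list"
  assume y: "length y = outs (Tens A B)"
  have "y = f (take (ins A) x) @ g (drop (ins A) x) \<longleftrightarrow>
      take (outs A) y = f (take (ins A) x) \<and> drop (outs A) y = g (drop (ins A) x)"
  proof
    assume "take (outs A) y = f (take (ins A) x) \<and> drop (outs A) y = g (drop (ins A) x)"
    then show "y = f (take (ins A) x) @ g (drop (ins A) x)"
      by (metis append_take_drop_id)
  qed (use x fA in simp)
  then show "sem (Tens A B) y x = (if y = f (take (ins A) x) @ g (drop (ins A) x) then 1 else 0)"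
    using x y fA gB by simp
qed

lemma sem_Comp_perm_right:
  assumes "perm_diagram B g" and "length x = ins B"
  shows "sem (Comp A B) y x = sem A y (g x)"
proof -
  have "sem (Comp A B) y x = (\<Sum>z\<in>bits (outs B). sem A y z * (if z = g x then 1 else 0))"
    using assms by (auto simp: perm_diagram_def intro: sum.cong)
  also have "\<dots> = (\<Sum>z\<in>bits (outs B). if z = g x then sem A y z else 0)"
    by (rule sum.cong) auto
  also have "\<dots> = sem A y (g x)"
    using assms by (simp add: perm_diagram_def sum_bits_delta)
  finally show ?thesis .
qed

lemma sem_Comp_perm_left:
  assumes P: "perm_diagram P g" and io: "outs A = ins P" "outs P = ins P" and y: "length y = outs P"
    and invol: "\<And>z. length z = ins P \<Longrightarrow> g (g z) = z"
  shows "sem (Comp P A) y x = sem A (g y) x"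
proof -
  have "y = g z \<longleftrightarrow> z = g y" if "length z = ins P" for z
    using invol that y io by auto
  then have "sem (Comp P A) y x = (\<Sum>z\<in>bits (outs A). (if z = g y then 1 else 0) * sem A z x)"
    using P io y unfolding perm_diagram_def by (simp only: sem.simps) (rule sum.cong; simp)
  also have "\<dots> = (\<Sum>z\<in>bits (outs A). if z = g y then sem A z x else 0)"
    by (rule sum.cong) auto
  also have "\<dots> = sem A (g y) x"
    using P io y by (simp add: perm_diagram_def sum_bits_delta)
  finally show ?thesis .
qed

lemma perm_diagram_Comp:
  assumes A: "perm_diagram A f" and B: "perm_diagram B g" and io: "outs B = ins A"
  shows "perm_diagram (Comp A B) (f \<circ> g)"
  unfolding perm_diagram_def
proof (intro conjI allI impI)
  show "wf (Comp A B)"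
    using A B io by (simp add: perm_diagram_def)
  fix x :: "bool list"
  assume x: "length x = ins (Comp A B)"
  then show "length ((f \<circ> g) x) = outs (Comp A B)"
    using A B io by (simp add: perm_diagram_def)
  fix y :: "bool list"
  assume "length y = outs (Comp A B)"
  have "sem (Comp A B) y x = sem A y (g x)"
    using x by (intro sem_Comp_perm_right[OF B]) simp
  also have "\<dots> = (if y = (f \<circ> g) x then 1 else 0)"
    using A B io x \<open>length y = outs (Comp A B)\<close> by (simp add: perm_diagram_def)
  finally show "sem (Comp A B) y x = (if y = (f \<circ> g) x then 1 else 0)" .
qed

lemma wires_io [simp]: "ins (wires r) = r" "outs (wires r) = r" "wf (wires r)"
  by (induction r) auto

lemma perm_diagram_wires: "perm_diagram (wires r) id"
proof (induction r)
  case 0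
  then show ?case
    using perm_diagram_Emp by (simp add: id_def)
next
  case (Suc r)
  show ?case
    unfolding wires.simps using perm_diagram_Tens[OF perm_diagram_Wire Suc]
    by (rule perm_diagram_cong) simp
qed

lemma sem_wires: "length x = r \<Longrightarrow> length y = r \<Longrightarrow> sem (wires r) y x = (if y = x then 1 else 0)"
  using perm_diagram_wires[of r] by (simp add: perm_diagram_def)

fun rotate_wires :: "nat \<Rightarrow> zx" where
  "rotate_wires 0 = Wire"
| "rotate_wires (Suc q) = Comp (Tens Wire (rotate_wires q)) (Tens Swap (wires q))"

lemma rotate_wires_io [simp]: "ins (rotate_wires q) = Suc q" "outs (rotate_wires q) = Suc q"
  by (induction q) auto

lemma perm_diagram_rotate_wires: "perm_diagram (rotate_wires q) rotate1"
proof (induction q)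
  case 0
  show ?case
    unfolding rotate_wires.simps using perm_diagram_Wire
    by (rule perm_diagram_cong) (auto simp: length_Suc_conv)
next
  case (Suc q)
  have "perm_diagram (rotate_wires (Suc q))
      ((\<lambda>x. id (take 1 x) @ rotate1 (drop 1 x)) \<circ> (\<lambda>x. rev (take 2 x) @ id (drop 2 x)))"
    unfolding rotate_wires.simps
    using perm_diagram_Comp[OF perm_diagram_Tens[OF perm_diagram_Wire Suc]
        perm_diagram_Tens[OF perm_diagram_Swap perm_diagram_wires]]
    by simp
  then show ?case
    by (rule perm_diagram_cong) (auto simp: length_Suc_conv numeral_2_eq_2)
qed

fun block_swap :: "nat \<Rightarrow> nat \<Rightarrow> zx" where
  "block_swap 0 q = wires q"
| "block_swap (Suc p) q = Comp (Tens (rotate_wires q) (wires p)) (Tens Wire (block_swap p q))"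

lemma block_swap_io [simp]: "ins (block_swap p q) = p + q" "outs (block_swap p q) = q + p"
  by (induction p) auto

lemma perm_diagram_block_swap: "perm_diagram (block_swap p q) (\<lambda>x. drop p x @ take p x)"
proof (induction p)
  case 0
  show ?case
    unfolding block_swap.simps using perm_diagram_wires by (rule perm_diagram_cong) simp
next
  case (Suc p)
  have "perm_diagram (block_swap (Suc p) q)
      ((\<lambda>x. rotate1 (take (Suc q) x) @ id (drop (Suc q) x)) \<circ>
       (\<lambda>x. id (take 1 x) @ (drop p (drop 1 x) @ take p (drop 1 x))))"
    unfolding block_swap.simps
    using perm_diagram_Comp[OF perm_diagram_Tens[OF perm_diagram_rotate_wires perm_diagram_wires]
        perm_diagram_Tens[OF perm_diagram_Wire Suc]]
    by simp
  then show ?case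
    by (rule perm_diagram_cong) (auto simp: length_Suc_conv)
qed

lemma sem_block_swap:
  "length x = p + q \<Longrightarrow> length y = q + p \<Longrightarrow>
     sem (block_swap p q) y x = (if y = drop p x @ take p x then 1 else 0)"
  using perm_diagram_block_swap[of p q] by (simp add: perm_diagram_def)

lemma wf_block_swap [simp]: "wf (block_swap p q)"
  using perm_diagram_block_swap[of p q] by (simp add: perm_diagram_def)

section \<open>Scalars, effects and diagonal maps\<close>

lemma All_Not_bool [simp]: "(\<forall>b::bool. \<not> b) = False"
  by auto

lemma sqrt2_mult_sqrt2: "complex_of_real (sqrt 2) * complex_of_real (sqrt 2) = 2"
  by (simp flip: of_real_mult)

lemma two_div_sqrt2: "2 / complex_of_real (sqrt 2) = complex_of_real (sqrt 2)"
  by (metis of_real_divide of_real_numeral real_div_sqrt zero_le_numeral)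

definition is_scalar :: "zx \<Rightarrow> complex \<Rightarrow> bool" where
  "is_scalar S z \<longleftrightarrow> wf S \<and> ins S = 0 \<and> outs S = 0 \<and> sem S [] [] = z"

lemma is_scalar_Tens: "is_scalar S a \<Longrightarrow> is_scalar T b \<Longrightarrow> is_scalar (Tens S T) (a * b)"
  by (simp add: is_scalar_def)

lemma is_scalar_X_pair:
  assumes "0 < r" "r \<le> 4"
  shows "is_scalar (Tens (XS 0 0 (arccos (r / 2 - 1))) (XS 0 0 (- arccos (r / 2 - 1)))) r"
proof -
  define a where "a = arccos (r / 2 - 1)"
  have "cos a = r / 2 - 1"
    unfolding a_def using assms by (intro cos_arccos) auto
  moreover have "sin a * sin a + cos a * cos a = 1"
    using sin_cos_squared_add[of a] by (simp add: power2_eq_square)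
  ultimately have "(1 + cis a) * (1 + cis (- a)) = complex_of_real r"
    by (simp add: complex_eq_iff algebra_simps)
  then show ?thesis
    by (simp add: is_scalar_def a_def cis_conv_exp)
qed

lemma ex_scalar_pos:
  assumes "0 < r"
  shows "\<exists>S. is_scalar S (complex_of_real r)"
proof -
  have bounded: "\<exists>S. is_scalar S (complex_of_real r)" if "0 < r" "r \<le> 4 * 2 ^ k" for k r
    using that
  proof (induction k arbitrary: r)
    case 0
    then show ?case
      using is_scalar_X_pair by auto
  next
    case (Suc k)
    then have "0 < r / 2" "r / 2 \<le> 4 * 2 ^ k"
      by simp_all
    then obtain S where "is_scalar S (complex_of_real (r / 2))"
      using Suc.IH by blast
    moreover have "is_scalar (ZS 0 0 0) 2"
      by (simp add: is_scalar_def)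
    ultimately have "is_scalar (Tens S (ZS 0 0 0)) (complex_of_real (r / 2) * 2)"
      by (rule is_scalar_Tens)
    then show ?case
      by auto
  qed
  obtain k where "r < 2 ^ k"
    using real_arch_pow[of 2 r] by auto
  moreover have "(2::real) ^ k \<le> 4 * 2 ^ k"
    by simp
  ultimately have "r \<le> 4 * 2 ^ k"
    by linarith
  then show ?thesis
    using bounded assms by blast
qed

lemma is_scalar_phase:
  "is_scalar (Comp (ZS 1 0 pi) (XS 0 1 t)) (complex_of_real (sqrt 2) * exp (\<i> * complex_of_real t))"
proof -
  have "sem (Comp (ZS 1 0 pi) (XS 0 1 t)) [] [] =
      complex_of_real (1 / sqrt 2) * (1 + exp (\<i> * complex_of_real t))
    - complex_of_real (1 / sqrt 2) * (1 - exp (\<i> * complex_of_real t))"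
    by (simp add: sum_bits_one nones_def field_simps)
  also have "\<dots> = complex_of_real (2 / sqrt 2) * exp (\<i> * complex_of_real t)"
    by (simp add: field_simps add_divide_distrib[symmetric] diff_divide_distrib[symmetric])
  finally show ?thesis
    by (simp add: is_scalar_def real_div_sqrt)
qed

lemma ex_scalar: "\<exists>S. is_scalar S z"
proof (cases "z = 0")
  case True
  then show ?thesis
    by (intro exI[of _ "XS 0 0 pi"]) (simp add: is_scalar_def)
next
  case False
  then obtain S where "is_scalar S (complex_of_real (cmod z / sqrt 2))"
    using ex_scalar_pos[of "cmod z / sqrt 2"] by auto
  then have "is_scalar (Tens S (Comp (ZS 1 0 pi) (XS 0 1 (Arg z))))
      (complex_of_real (cmod z / sqrt 2) * (complex_of_real (sqrt 2) * exp (\<i> * complex_of_real (Arg z))))"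
    using is_scalar_phase by (rule is_scalar_Tens)
  also have "complex_of_real (cmod z / sqrt 2) * (complex_of_real (sqrt 2) * exp (\<i> * complex_of_real (Arg z)))
      = complex_of_real (cmod z) * cis (Arg z)"
    by (simp add: cis_conv_exp)
  also have "\<dots> = z"
    using False by (simp add: cis_Arg sgn_eq)
  finally show ?thesis ..
qed

definition scalar :: "complex \<Rightarrow> zx" where
  "scalar z = (SOME S. is_scalar S z)"

lemma is_scalar_scalar: "is_scalar (scalar z) z"
  unfolding scalar_def using ex_scalar by (rule someI_ex)

lemma scalar_io [simp]: "wf (scalar z)" "ins (scalar z) = 0" "outs (scalar z) = 0"
  using is_scalar_scalar[of z] by (simp_all add: is_scalar_def)

lemma sem_scalar [simp]: "sem (scalar z) [] [] = z"
  using is_scalar_scalar[of z] by (simp add: is_scalar_def)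

lemma sem_Tens_scalar [simp]: "sem (Tens (scalar z) D) y x = z * sem D y x"
  using is_scalar_scalar[of z] by (simp add: is_scalar_def)

lemma sem_phased_X_effect:
  "sem (Comp (XS 1 0 a) (ZS 1 1 b)) [] [c] =
     (if c then (1 - exp (\<i> * complex_of_real a)) * exp (\<i> * complex_of_real b)
      else 1 + exp (\<i> * complex_of_real a)) / complex_of_real (sqrt 2)"
  by (cases c) (simp_all add: sum_bits_one nones_def)

lemma sem_X_effect_basis:
  "sem (XS 1 0 0) [] [b] = (if b then 0 else complex_of_real (sqrt 2))"
  "sem (XS 1 0 pi) [] [b] = (if b then complex_of_real (sqrt 2) else 0)"
  by (simp_all add: nones_def two_div_sqrt2)

lemma unit_exp_Arg:
  assumes "cmod u = 1"
  shows "exp (\<i> * complex_of_real (Arg u)) = u"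
proof -
  have "u \<noteq> 0"
    using assms by auto
  then show ?thesis
    using assms by (simp add: cis_conv_exp[symmetric] cis_Arg sgn_eq)
qed

lemma norm_cayley: "cmod ((1 - \<i> * complex_of_real r) / (1 + \<i> * complex_of_real r)) = 1"
proof -
  have "1 + \<i> * complex_of_real r = Complex 1 r" "1 - \<i> * complex_of_real r = Complex 1 (- r)"
    by (simp_all add: complex_eq_iff)
  moreover have "0 < 1 + r\<^sup>2"
    by (intro add_pos_nonneg) auto
  ultimately show ?thesis
    by (simp add: norm_divide complex_norm)
qed

definition is_effect :: "zx \<Rightarrow> complex \<Rightarrow> complex \<Rightarrow> bool" where
  "is_effect E p q \<longleftrightarrow> wf E \<and> ins E = 1 \<and> outs E = 0 \<and> sem E [] [False] = p \<and> sem E [] [True] = q"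

lemma is_effect_Tens_scalar:
  "wf E \<Longrightarrow> ins E = 1 \<Longrightarrow> outs E = 0 \<Longrightarrow>
     is_effect (Tens (scalar z) E) (z * sem E [] [False]) (z * sem E [] [True])"
  by (simp add: is_effect_def)

text \<open>For w = (1 - i r) / (1 + i r) on the unit circle the phased X-effect has weights
  proportional to (1 + w, (1 - w) v), whose ratio - i r v has arbitrary modulus r and, through
  the unit v, arbitrary argument.\<close>
lemma ex_effect_nonzero:
  assumes p: "p \<noteq> 0" and q: "q \<noteq> 0"
  shows "\<exists>E. is_effect E p q"
proof -
  define r where "r = cmod (q / p)"
  have r: "r > 0"
    using p q by (simp add: r_def)
  define w where "w = (1 - \<i> * complex_of_real r) / (1 + \<i> * complex_of_real r)"
  have nz: "1 + \<i> * complex_of_real r \<noteq> 0"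
    by (simp add: complex_eq_iff)
  have "cmod w = 1"
    unfolding w_def by (rule norm_cayley)
  then obtain \<alpha> where \<alpha>: "exp (\<i> * complex_of_real \<alpha>) = w"
    using unit_exp_Arg by blast
  define v where "v = - \<i> * (q / p) / complex_of_real r"
  have "cmod v = 1"
    using r p q by (simp add: v_def norm_divide norm_mult r_def)
  then obtain \<beta> where \<beta>: "exp (\<i> * complex_of_real \<beta>) = v"
    using unit_exp_Arg by blast
  define \<kappa> where "\<kappa> = p * (1 + \<i> * complex_of_real r) / complex_of_real (sqrt 2)"
  let ?X = "Comp (XS 1 0 \<alpha>) (ZS 1 1 \<beta>)"
  have w1: "(1 + \<i> * complex_of_real r) * (1 + w) = 2"
    unfolding w_def using nz by (simp add: field_simps)
  have w2: "(1 + \<i> * complex_of_real r) * (1 - w) = 2 * \<i> * complex_of_real r"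
    unfolding w_def using nz by (simp add: field_simps)
  have "\<kappa> * sem ?X [] [False] = p * ((1 + \<i> * complex_of_real r) * (1 + w))
      / (complex_of_real (sqrt 2) * complex_of_real (sqrt 2))"
    unfolding sem_phased_X_effect \<alpha> \<kappa>_def by simp
  then have X0: "\<kappa> * sem ?X [] [False] = p"
    by (simp only: w1 sqrt2_mult_sqrt2) simp
  have "\<kappa> * sem ?X [] [True] = p * ((1 + \<i> * complex_of_real r) * (1 - w)) * v
      / (complex_of_real (sqrt 2) * complex_of_real (sqrt 2))"
    unfolding sem_phased_X_effect \<alpha> \<beta> \<kappa>_def by simp
  then have X1: "\<kappa> * sem ?X [] [True] = q"
    using r p by (simp only: w2 sqrt2_mult_sqrt2) (simp add: v_def)
  show ?thesis
    using is_effect_Tens_scalar[of ?X \<kappa>] X0 X1 by auto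
qed

lemma ex_effect: "\<exists>E. is_effect E p q"
proof -
  consider "p = 0" | "q = 0" | "p \<noteq> 0" "q \<noteq> 0"
    by blast
  then show ?thesis
  proof cases
    case 1
    then show ?thesis
      using is_effect_Tens_scalar[of "XS 1 0 pi" "q / sqrt 2"]
      unfolding sem_X_effect_basis by auto
  next
    case 2
    then show ?thesis
      using is_effect_Tens_scalar[of "XS 1 0 0" "p / sqrt 2"]
      unfolding sem_X_effect_basis by auto
  qed (rule ex_effect_nonzero)
qed

definition effect :: "complex \<Rightarrow> complex \<Rightarrow> zx" where
  "effect p q = (SOME E. is_effect E p q)"

lemma is_effect_effect: "is_effect (effect p q) p q"
  unfolding effect_def using ex_effect by (rule someI_ex)

definition diag :: "complex \<Rightarrow> complex \<Rightarrow> zx" where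
  "diag p q = Comp (Tens Wire (effect p q)) (ZS 1 2 0)"

lemma diag_io [simp]: "wf (diag p q)" "ins (diag p q) = 1" "outs (diag p q) = 1"
  using is_effect_effect[of p q] by (simp_all add: diag_def is_effect_def)

lemma sem_diag: "sem (diag p q) [b] [a] = (if a = b then if a then q else p else 0)"
  using is_effect_effect[of p q] by (cases a; cases b) (simp_all add: diag_def is_effect_def sum_bits_two)

section \<open>The triangle\<close>

lemma inv_sqrt2_mult_inv_sqrt2:
  "complex_of_real (1 / sqrt 2) * complex_of_real (1 / sqrt 2) = 1 / 2"
  by (simp flip: of_real_mult)

lemma sqrt3_mult_sqrt3: "complex_of_real (sqrt 3) * complex_of_real (sqrt 3) = 3"
  by (simp flip: of_real_mult)

lemma sem_Had_diag_Had:
  "sem (Comp Had (Comp (diag p q) Had)) [b] [a] = (if a = b then (p + q) / 2 else (p - q) / 2)"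
  by (cases a; cases b)
    (simp_all del: sem.simps(9) add: sem_Comp_one_wire sem_diag inv_sqrt2_mult_inv_sqrt2 sqrt2_mult_sqrt2 field_simps)

text \<open>Conjugated by H, the triangle [[1, 1], [0, 1]] becomes (1/2) [[3, -1], [1, 1]], which
  factors as diag(1, i / sqrt 3) \<cdot> H diag(1 + i sqrt 3, -1 + i sqrt 3) H \<cdot> diag(- i sqrt 3 / 2, -1/2).\<close>
definition triangle_core :: zx where
  "triangle_core =
     Comp (diag 1 (\<i> / complex_of_real (sqrt 3)))
       (Comp (Comp Had (Comp (diag (1 + \<i> * complex_of_real (sqrt 3)) (- 1 + \<i> * complex_of_real (sqrt 3))) Had))
          (diag (- \<i> * complex_of_real (sqrt 3) / 2) (- 1 / 2)))"

definition triangle :: zx where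
  "triangle = Comp Had (Comp triangle_core Had)"

lemma triangle_core_io [simp]: "wf triangle_core" "ins triangle_core = 1" "outs triangle_core = 1"
  by (simp_all add: triangle_core_def)

lemma triangle_io [simp]: "wf triangle" "ins triangle = 1" "outs triangle = 1"
  by (simp_all add: triangle_def)

lemma sem_triangle_core: "sem triangle_core [b] [a] = (if b then 1 / 2 else if a then - 1 / 2 else 3 / 2)"
  unfolding triangle_core_def
  by (cases a; cases b)
    (simp_all del: sem.simps(9) add: sem_Comp_one_wire sem_diag sem_Had_diag_Had sqrt3_mult_sqrt3 field_simps)

lemma sem_triangle: "sem triangle [t] [c] = (if t then if c then 1 else 0 else 1)"
  unfolding triangle_def
  by (cases t; cases c)
    (simp_all del: sem.simps(9) add: sem_Comp_one_wire sem_triangle_core inv_sqrt2_mult_inv_sqrt2 sqrt2_mult_sqrt2 field_simps)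

section \<open>Controlizers of the spider-like generators\<close>

fun par :: "zx \<Rightarrow> nat \<Rightarrow> zx" where
  "par A 0 = Emp"
| "par A (Suc k) = Tens A (par A k)"

lemma par_io:
  "ins A = 1 \<Longrightarrow> outs A = 1 \<Longrightarrow> wf A \<Longrightarrow> ins (par A k) = k \<and> outs (par A k) = k \<and> wf (par A k)"
  by (induction k) auto

lemma sem_par:
  "ins A = 1 \<Longrightarrow> outs A = 1 \<Longrightarrow> length y = k \<Longrightarrow> length x = k \<Longrightarrow>
     sem (par A k) y x = (\<Prod>j<k. sem A [y ! j] [x ! j])"
proof (induction k arbitrary: x y)
  case (Suc k)
  then obtain a x' b y' where x: "x = a # x'" and y: "y = b # y'" and l: "length x' = k" "length y' = k"
    by (cases x; cases y) auto
  have "sem (par A (Suc k)) y x = sem A [b] [a] * sem (par A k) y' x'"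
    using Suc.prems x y by simp
  also have "\<dots> = (\<Prod>j<Suc k. sem A [y ! j] [x ! j])"
    using Suc.IH[OF Suc.prems(1,2) l(2) l(1)] x y by (simp only: prod.lessThan_Suc_shift) simp
  finally show ?case .
qed simp

lemma sem_ZS_fanout: "length z = N \<Longrightarrow> sem (ZS 1 N 0) z [t] = (if z = replicate N t then 1 else 0)"
  by (cases t) (auto simp: replicate_length_same in_set_conv_nth)

definition fan :: "nat \<Rightarrow> zx \<Rightarrow> zx \<Rightarrow> zx" where
  "fan N L K = Comp (par L N) (Comp (ZS 1 N 0) K)"

lemma fan_io:
  assumes "ins L = 1" "outs L = 1" "wf L" "ins K = 1" "outs K = 1" "wf K"
  shows "wf (fan N L K)" "ins (fan N L K) = 1" "outs (fan N L K) = N"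
  unfolding fan_def using assms par_io[of L N] by simp_all

lemma sem_fan:
  assumes L: "ins L = 1" "outs L = 1" and K: "ins K = 1" "outs K = 1" and w: "length w = N"
  shows "sem (fan N L K) w [c] =
    sem K [False] [c] * (\<Prod>j<N. sem L [w ! j] [False]) + sem K [True] [c] * (\<Prod>j<N. sem L [w ! j] [True])"
proof -
  have "sem (fan N L K) w [c] = (\<Sum>z\<in>bits N. sem (par L N) w z * sem (Comp (ZS 1 N 0) K) z [c])"
    unfolding fan_def by (subst sem.simps(9)) (simp only: outs.simps)
  also have "\<dots> = (\<Sum>z\<in>bits N.
      (if z = replicate N False then sem (par L N) w z * sem K [False] [c] else 0) +
      (if z = replicate N True then sem (par L N) w z * sem K [True] [c] else 0))"
  proof (intro sum.cong refl)
    fix z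
    assume "z \<in> bits N"
    then have "sem (Comp (ZS 1 N 0) K) z [c] =
        (if z = replicate N False then 1 else 0) * sem K [False] [c] +
        (if z = replicate N True then 1 else 0) * sem K [True] [c]"
      using K by (simp only: sem_Comp_one_wire sem_ZS_fanout mem_bits)
    then show "sem (par L N) w z * sem (Comp (ZS 1 N 0) K) z [c] =
        (if z = replicate N False then sem (par L N) w z * sem K [False] [c] else 0) +
        (if z = replicate N True then sem (par L N) w z * sem K [True] [c] else 0)"
      by (simp add: distrib_left)
  qed
  also have "\<dots> = sem (par L N) w (replicate N False) * sem K [False] [c] +
      sem (par L N) w (replicate N True) * sem K [True] [c]"
    by (simp add: sum.distrib sum.delta)
  also have "\<dots> = sem K [False] [c] * (\<Prod>j<N. sem L [w ! j] [False]) +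
      sem K [True] [c] * (\<Prod>j<N. sem L [w ! j] [True])"
    using L w by (simp add: sem_par)
  finally show ?thesis .
qed

lemma nones_append [simp]: "nones (x @ y) = nones x + nones y"
  by (simp add: nones_def)

lemma prod_sign_nones: "(\<Prod>j<length w. if w ! j then - 1 else 1 :: complex) = (- 1) ^ nones w"
proof (induction w)
  case (Cons a w)
  have "(\<Prod>j<length (a # w). if (a # w) ! j then - 1 else 1 :: complex) =
      (if a then - 1 else 1) * (\<Prod>j<length w. if w ! j then - 1 else 1)"
    by (simp only: length_Cons prod.lessThan_Suc_shift) simp
  then show ?case
    using Cons by (simp add: nones_def)
qed (simp add: nones_def)

definition ctrl_scalar :: "nat \<Rightarrow> nat \<Rightarrow> complex" where
  "ctrl_scalar n m = complex_of_real (sqrt 2) ^ (n + m)"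

definition controlizes :: "zx \<Rightarrow> zx \<Rightarrow> bool" where
  "controlizes G D \<longleftrightarrow> controlled_state G \<and> outs G = ins D + outs D \<and>
     (\<forall>x y. length x = ins D \<longrightarrow> length y = outs D \<longrightarrow>
        sem G (x @ y) [True] = ctrl_scalar (ins D) (outs D) * sem D y x)"

lemma controlizes_cong:
  "controlizes G D \<Longrightarrow> ins D' = ins D \<Longrightarrow> outs D' = outs D \<Longrightarrow>
    (\<And>x y. length x = ins D \<Longrightarrow> length y = outs D \<Longrightarrow> sem D' y x = sem D y x) \<Longrightarrow> controlizes G D'"
  unfolding controlizes_def by simp

lemma controlizes_sem:
  "controlizes G D \<Longrightarrow> length x = ins D \<Longrightarrow> length y = outs D \<Longrightarrow>
     sem G (x @ y) [True] = ctrl_scalar (ins D) (outs D) * sem D y x"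
  by (simp add: controlizes_def)

definition scaled_had :: zx where
  "scaled_had = Tens (scalar (sqrt 2)) Had"

lemma scaled_had_io [simp]: "wf scaled_had" "ins scaled_had = 1" "outs scaled_had = 1"
  by (simp_all add: scaled_had_def)

lemma sem_scaled_had: "sem scaled_had [w] [t] = (if t \<and> w then - 1 else 1)"
  by (simp add: scaled_had_def flip: of_real_mult)

definition ctrl_xs :: "nat \<Rightarrow> real \<Rightarrow> zx" where
  "ctrl_xs N a = fan N scaled_had (Comp (ZS 1 1 a) triangle)"

lemma ctrl_xs_io: "wf (ctrl_xs N a)" "ins (ctrl_xs N a) = 1" "outs (ctrl_xs N a) = N"
  unfolding ctrl_xs_def by (simp_all add: fan_io)

lemma sem_ctrl_xs:
  "length w = N \<Longrightarrow>
     sem (ctrl_xs N a) w [c] = (if c then 1 + exp (\<i> * complex_of_real a) * (- 1) ^ nones w else 1)"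
  unfolding ctrl_xs_def using prod_sign_nones[of w]
  by (simp del: sem.simps(9) add: sem_fan sem_Comp_one_wire sem_scaled_had sem_triangle)

lemma controlizes_ctrl_xs: "controlizes (ctrl_xs (n + m) a) (XS n m a)"
  unfolding controlizes_def controlled_state_def
proof (intro conjI allI impI)
  fix x y :: "bool list"
  assume "length x = ins (XS n m a)" "length y = outs (XS n m a)"
  then have "sem (ctrl_xs (n + m) a) (x @ y) [True] = 1 + exp (\<i> * complex_of_real a) * (- 1) ^ (nones x + nones y)"
    by (simp add: sem_ctrl_xs)
  moreover have "complex_of_real (sqrt 2) ^ k * complex_of_real ((1 / sqrt 2) ^ k) = 1" for k
    by (simp add: power_one_over flip: of_real_power)
  ultimately show "sem (ctrl_xs (n + m) a) (x @ y) [True] = ctrl_scalar (ins (XS n m a)) (outs (XS n m a)) * sem (XS n m a) y x"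
    by (simp add: ctrl_scalar_def add.commute mult.assoc[symmetric])
qed (simp_all add: ctrl_xs_io sem_ctrl_xs)

definition ctrl_had :: zx where
  "ctrl_had = fan 2 (Comp (XS 1 1 pi) (Comp triangle (XS 1 1 pi)))
     (Comp (diag 1 (- 2)) (Comp triangle (diag 1 (sqrt 2))))"

lemma ctrl_had_io: "wf ctrl_had" "ins ctrl_had = 1" "outs ctrl_had = 2"
  unfolding ctrl_had_def by (simp_all add: fan_io)

text \<open>The legs send |0> to |0> + |1> and |1> to |1>, so for control 1 the fan evaluates to
  sqrt 2 - 2 sqrt 2 [w = (1, 1)], which is twice the Hadamard matrix.\<close>
lemma controlizes_ctrl_had: "controlizes ctrl_had Had"
  unfolding controlizes_def controlled_state_def
proof (intro conjI allI impI)
  fix w :: "bool list"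
  assume "length w = outs ctrl_had"
  then obtain a b where w: "w = [a, b]"
    by (auto simp: ctrl_had_io length_Suc_conv numeral_2_eq_2)
  show "sem ctrl_had w [False] = 1"
    unfolding ctrl_had_def w
    by (cases a; cases b)
      (simp_all del: sem.simps(9) add: sem_fan sem_Comp_one_wire nones_def sem_triangle sem_diag numeral_2_eq_2)
next
  fix x y :: "bool list"
  assume "length x = ins Had" "length y = outs Had"
  then obtain a b where x: "x = [a]" and y: "y = [b]"
    by (auto simp: length_Suc_conv)
  show "sem ctrl_had (x @ y) [True] = ctrl_scalar (ins Had) (outs Had) * sem Had y x"
    unfolding ctrl_had_def x y
    by (cases a; cases b)
      (simp_all del: sem.simps(9) add: sem_fan sem_Comp_one_wire nones_def sem_triangle sem_diag
        numeral_2_eq_2 ctrl_scalar_def sqrt2_mult_sqrt2 field_simps)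
qed (simp_all add: ctrl_had_io)

lemma controlizes_Emp: "controlizes (ZS 1 0 0) Emp"
  by (simp add: controlizes_def controlled_state_def ctrl_scalar_def)

lemma inv_sqrt2_sq: "(1 / complex_of_real (sqrt 2))\<^sup>2 = 1 / 2"
  by (simp add: power_one_over flip: of_real_power)

lemma controlizes_Wire: "controlizes (ctrl_xs 2 0) Wire"
  using controlizes_ctrl_xs[of 1 1 0, unfolded one_add_one]
proof (rule controlizes_cong)
  fix x y :: "bool list"
  assume "length x = ins (XS 1 1 0)" "length y = outs (XS 1 1 0)"
  then obtain a b where "x = [a]" "y = [b]"
    by (auto simp: length_Suc_conv)
  then show "sem Wire y x = sem (XS 1 1 0) y x"
    by (cases a; cases b) (simp_all add: nones_def)
qed simp_all

lemma controlizes_Cup: "controlizes (ctrl_xs 2 0) Cup"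
  using controlizes_ctrl_xs[of 2 0 0, unfolded add_0_right]
proof (rule controlizes_cong)
  fix x y :: "bool list"
  assume "length x = ins (XS 2 0 0)" "length y = outs (XS 2 0 0)"
  then obtain a b where "x = [a, b]" "y = []"
    by (auto simp: length_Suc_conv numeral_2_eq_2)
  then show "sem Cup y x = sem (XS 2 0 0) y x"
    by (cases a; cases b) (simp_all add: nones_def inv_sqrt2_sq)
qed simp_all

lemma controlizes_Cap: "controlizes (ctrl_xs 2 0) Cap"
  using controlizes_ctrl_xs[of 0 2 0, unfolded add_0]
proof (rule controlizes_cong)
  fix x y :: "bool list"
  assume "length x = ins (XS 0 2 0)" "length y = outs (XS 0 2 0)"
  then obtain a b where "y = [a, b]" "x = []"
    by (auto simp: length_Suc_conv numeral_2_eq_2)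
  then show "sem Cap y x = sem (XS 0 2 0) y x"
    by (cases a; cases b) (simp_all add: nones_def inv_sqrt2_sq)
qed simp_all

section \<open>Tensor products and compositions\<close>

definition tens_shuffle :: "nat \<Rightarrow> nat \<Rightarrow> nat \<Rightarrow> nat \<Rightarrow> zx" where
  "tens_shuffle n1 m1 n2 m2 = Tens (wires n1) (Tens (block_swap m1 n2) (wires m2))"

lemma tens_shuffle_io:
  "wf (tens_shuffle n1 m1 n2 m2)" "ins (tens_shuffle n1 m1 n2 m2) = n1 + (m1 + n2 + m2)"
  "outs (tens_shuffle n1 m1 n2 m2) = n1 + (n2 + m1 + m2)"
  unfolding tens_shuffle_def by simp_all

lemma sem_tens_shuffle:
  assumes "length x1 = n1" "length x2 = n2" "length y1 = m1" "length y2 = m2"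
    "length u1 = n1" "length u2 = m1" "length u3 = n2" "length u4 = m2"
  shows "sem (tens_shuffle n1 m1 n2 m2) (x1 @ x2 @ y1 @ y2) (u1 @ u2 @ u3 @ u4) =
    (if u1 = x1 \<and> u2 = y1 \<and> u3 = x2 \<and> u4 = y2 then 1 else 0)"
  using assms by (auto simp: tens_shuffle_def sem_wires sem_block_swap)

definition half_cup :: zx where
  "half_cup = Tens (scalar (1 / 2)) Cup"

fun cups :: "nat \<Rightarrow> zx" where
  "cups 0 = Emp"
| "cups (Suc k) = Comp (Tens half_cup (cups k)) (Tens Wire (Tens (block_swap k 1) (wires k)))"

lemma half_cup_io [simp]: "wf half_cup" "ins half_cup = 2" "outs half_cup = 0"
  by (simp_all add: half_cup_def)

lemma cups_io: "wf (cups k)" "ins (cups k) = k + k" "outs (cups k) = 0"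
  by (induction k) auto

lemma sem_cups:
  "length u = k \<Longrightarrow> length v = k \<Longrightarrow> sem (cups k) [] (u @ v) = (if u = v then (1 / 2) ^ k else 0)"
proof (induction k arbitrary: u v)
  case (Suc k)
  then obtain a u' b v' where u: "u = a # u'" and v: "v = b # v'" and l: "length u' = k" "length v' = k"
    by (cases u; cases v) auto
  have perm: "perm_diagram (Tens Wire (Tens (block_swap k 1) (wires k)))
      (\<lambda>x. id (take (ins Wire) x) @ ((\<lambda>x. drop k x @ take k x) (take (ins (block_swap k 1))
         (drop (ins Wire) x)) @ id (drop (ins (block_swap k 1)) (drop (ins Wire) x))))"
    by (intro perm_diagram_Tens perm_diagram_Wire perm_diagram_block_swap perm_diagram_wires)
  have "sem (cups (Suc k)) [] (u @ v) = sem (Tens half_cup (cups k)) [] (a # b # u' @ v')"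
    unfolding cups.simps by (subst sem_Comp_perm_right[OF perm]) (use u v l in simp_all)
  also have "\<dots> = sem half_cup [] [a, b] * sem (cups k) [] (u' @ v')"
    using cups_io[of k] by simp
  also have "\<dots> = (if u = v then (1 / 2) ^ Suc k else 0)"
    using Suc.IH[OF l] u v by (simp add: half_cup_def)
  finally show ?case .
qed simp

definition comp_contract :: "nat \<Rightarrow> nat \<Rightarrow> nat \<Rightarrow> zx" where
  "comp_contract n k m = Tens (wires n) (Tens (cups k) (wires m))"

lemma comp_contract_io:
  "wf (comp_contract n k m)" "ins (comp_contract n k m) = n + (k + k + m)"
  "outs (comp_contract n k m) = n + (0 + m)"
  unfolding comp_contract_def using cups_io[of k] by simp_all

lemma sem_comp_contract:
  assumes "length x = n" "length y = m" "length u1 = n" "length u2 = k" "length u3 = k" "length u4 = m"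
  shows "sem (comp_contract n k m) (x @ y) (u1 @ u2 @ u3 @ u4) =
    (if u1 = x \<and> u2 = u3 \<and> u4 = y then (1 / 2) ^ k else 0)"
  using assms cups_io[of k] by (auto simp: comp_contract_def sem_wires sem_cups)

text \<open>The idle factor wires 0 (= Emp) only matches the shape of the compositionality clauses
  of the theorem.\<close>
definition ctrl_pair :: "zx \<Rightarrow> zx \<Rightarrow> zx" where
  "ctrl_pair G1 G2 = Comp (Tens (Tens G1 G2) (wires 0)) (ZS 1 2 0)"

lemma sem_ctrl_pair:
  assumes "ins G1 = 1" "ins G2 = 1" "length z = outs G1 + outs G2 + 0"
  shows "sem (ctrl_pair G1 G2) z [c] = sem G1 (take (outs G1) z) [c] * sem G2 (drop (outs G1) z) [c]"
  using assms by (cases c) (simp_all add: ctrl_pair_def sum_bits_two)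

definition ctrl_tens :: "nat \<Rightarrow> nat \<Rightarrow> nat \<Rightarrow> nat \<Rightarrow> zx \<Rightarrow> zx \<Rightarrow> zx" where
  "ctrl_tens n1 m1 n2 m2 G1 G2 = Comp (tens_shuffle n1 m1 n2 m2) (ctrl_pair G1 G2)"

definition ctrl_comp :: "nat \<Rightarrow> nat \<Rightarrow> nat \<Rightarrow> zx \<Rightarrow> zx \<Rightarrow> zx" where
  "ctrl_comp n k m G1 G3 = Comp (comp_contract n k m) (ctrl_pair G1 G3)"

lemma sum_bits_delta4:
  assumes "length a = k1" "length b = k2" "length c = k3" "length d = k4"
  shows "(\<Sum>u1\<in>bits k1. \<Sum>u2\<in>bits k2. \<Sum>u3\<in>bits k3. \<Sum>u4\<in>bits k4.
     if u1 = a \<and> u2 = b \<and> u3 = c \<and> u4 = d then F else 0) = F"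
proof -
  have "(\<Sum>u4\<in>bits k4. if u1 = a \<and> u2 = b \<and> u3 = c \<and> u4 = d then F else 0) =
      (if u1 = a \<and> u2 = b \<and> u3 = c then F else 0)" for u1 u2 u3
    using assms(4) by (cases "u1 = a \<and> u2 = b \<and> u3 = c") (auto simp: sum_bits_delta)
  moreover have "(\<Sum>u3\<in>bits k3. if u1 = a \<and> u2 = b \<and> u3 = c then F else 0) =
      (if u1 = a \<and> u2 = b then F else 0)" for u1 u2
    using assms(3) by (cases "u1 = a \<and> u2 = b") (auto simp: sum_bits_delta)
  moreover have "(\<Sum>u2\<in>bits k2. if u1 = a \<and> u2 = b then F else 0) = (if u1 = a then F else 0)" for u1
    using assms(2) by (cases "u1 = a") (auto simp: sum_bits_delta)
  ultimately show ?thesis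
    using assms(1) by (simp add: sum_bits_delta)
qed

lemma sem_ctrl_tens:
  assumes G: "ins G1 = 1" "ins G2 = 1" "outs G1 = n1 + m1" "outs G2 = n2 + m2"
    and l: "length x1 = n1" "length x2 = n2" "length y1 = m1" "length y2 = m2"
  shows "sem (ctrl_tens n1 m1 n2 m2 G1 G2) (x1 @ x2 @ y1 @ y2) [c] = sem G1 (x1 @ y1) [c] * sem G2 (x2 @ y2) [c]"
proof -
  have "sem (ctrl_tens n1 m1 n2 m2 G1 G2) (x1 @ x2 @ y1 @ y2) [c] =
      (\<Sum>z\<in>bits ((n1 + m1) + (n2 + m2)).
         sem (tens_shuffle n1 m1 n2 m2) (x1 @ x2 @ y1 @ y2) z * sem (ctrl_pair G1 G2) z [c])"
    by (simp add: ctrl_tens_def ctrl_pair_def G)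
  also have "\<dots> = (\<Sum>u1\<in>bits n1. \<Sum>u2\<in>bits m1. \<Sum>u3\<in>bits n2. \<Sum>u4\<in>bits m2.
      if u1 = x1 \<and> u2 = y1 \<and> u3 = x2 \<and> u4 = y2 then sem G1 (x1 @ y1) [c] * sem G2 (x2 @ y2) [c] else 0)"
    unfolding sum_bits_add
  proof (intro sum.cong refl)
    fix u1 u2 u3 u4
    assume u: "u1 \<in> bits n1" "u2 \<in> bits m1" "u3 \<in> bits n2" "u4 \<in> bits m2"
    then have "sem (ctrl_pair G1 G2) (u1 @ u2 @ u3 @ u4) [c] = sem G1 (u1 @ u2) [c] * sem G2 (u3 @ u4) [c]"
      using G by (subst sem_ctrl_pair) simp_all
    then show "sem (tens_shuffle n1 m1 n2 m2) (x1 @ x2 @ y1 @ y2) ((u1 @ u2) @ u3 @ u4) *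
        sem (ctrl_pair G1 G2) ((u1 @ u2) @ u3 @ u4) [c] =
      (if u1 = x1 \<and> u2 = y1 \<and> u3 = x2 \<and> u4 = y2 then sem G1 (x1 @ y1) [c] * sem G2 (x2 @ y2) [c] else 0)"
      using u l by (simp add: sem_tens_shuffle)
  qed
  also have "\<dots> = sem G1 (x1 @ y1) [c] * sem G2 (x2 @ y2) [c]"
    by (rule sum_bits_delta4[OF l(1) l(3) l(2) l(4)])
  finally show ?thesis .
qed

lemma sum_if_cond: "(\<Sum>u\<in>S. if Q then f u else 0) = (if Q then \<Sum>u\<in>S. f u else 0)"
  by simp

lemma sem_ctrl_comp:
  assumes G: "ins G1 = 1" "ins G3 = 1" "outs G1 = n + k" "outs G3 = k + m"
    and l: "length x = n" "length y = m"
  shows "sem (ctrl_comp n k m G1 G3) (x @ y) [c] =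
    (1 / 2) ^ k * (\<Sum>u\<in>bits k. sem G1 (x @ u) [c] * sem G3 (u @ y) [c])"
proof -
  have "sem (ctrl_comp n k m G1 G3) (x @ y) [c] =
      (\<Sum>z\<in>bits ((n + k) + (k + m)). sem (comp_contract n k m) (x @ y) z * sem (ctrl_pair G1 G3) z [c])"
    by (simp add: ctrl_comp_def ctrl_pair_def G)
  also have "\<dots> = (\<Sum>u1\<in>bits n. \<Sum>u2\<in>bits k. \<Sum>u3\<in>bits k. \<Sum>u4\<in>bits m.
      if u1 = x then if u3 = u2 then if u4 = y then
        (1 / 2) ^ k * (sem G1 (x @ u2) [c] * sem G3 (u2 @ y) [c]) else 0 else 0 else 0)"
    unfolding sum_bits_add
  proof (intro sum.cong refl)
    fix u1 u2 u3 u4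
    assume u: "u1 \<in> bits n" "u2 \<in> bits k" "u3 \<in> bits k" "u4 \<in> bits m"
    then have "sem (ctrl_pair G1 G3) (u1 @ u2 @ u3 @ u4) [c] = sem G1 (u1 @ u2) [c] * sem G3 (u3 @ u4) [c]"
      using G by (subst sem_ctrl_pair) simp_all
    then show "sem (comp_contract n k m) (x @ y) ((u1 @ u2) @ u3 @ u4) * sem (ctrl_pair G1 G3) ((u1 @ u2) @ u3 @ u4) [c] =
      (if u1 = x then if u3 = u2 then if u4 = y then
        (1 / 2) ^ k * (sem G1 (x @ u2) [c] * sem G3 (u2 @ y) [c]) else 0 else 0 else 0)"
      using u l by (auto simp: sem_comp_contract)
  qed
  also have "\<dots> = (\<Sum>u\<in>bits k. (1 / 2) ^ k * (sem G1 (x @ u) [c] * sem G3 (u @ y) [c]))"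
    using l by (simp add: sum_if_cond sum.delta sum.delta')
  also have "\<dots> = (1 / 2) ^ k * (\<Sum>u\<in>bits k. sem G1 (x @ u) [c] * sem G3 (u @ y) [c])"
    by (simp add: sum_distrib_left)
  finally show ?thesis .
qed

lemma ctrl_scalar_add: "ctrl_scalar (n1 + n2) (m1 + m2) = ctrl_scalar n1 m1 * ctrl_scalar n2 m2"
  unfolding ctrl_scalar_def by (simp add: power_add[symmetric] add_ac)

lemma ctrl_scalar_contract: "(1 / 2) ^ k * (ctrl_scalar n k * ctrl_scalar k m) = ctrl_scalar n m"
proof -
  have "complex_of_real (sqrt 2) ^ (k + k) = 2 ^ k"
    by (simp add: power_add[symmetric] mult_2[symmetric] power_mult flip: of_real_power)
  moreover have "ctrl_scalar n k * ctrl_scalar k m = ctrl_scalar n m * complex_of_real (sqrt 2) ^ (k + k)"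
    unfolding ctrl_scalar_def by (simp add: power_add[symmetric] add_ac)
  ultimately show ?thesis
    by (simp add: power_one_over)
qed

lemma controlizes_ctrl_tens:
  assumes "controlizes G1 D1" "controlizes G2 D2"
  shows "controlizes (ctrl_tens (ins D1) (outs D1) (ins D2) (outs D2) G1 G2) (Tens D1 D2)"
proof -
  note G = assms[unfolded controlizes_def controlled_state_def]
  let ?C = "ctrl_tens (ins D1) (outs D1) (ins D2) (outs D2) G1 G2"
  have split: "sem ?C (x1 @ x2 @ y1 @ y2) [c] = sem G1 (x1 @ y1) [c] * sem G2 (x2 @ y2) [c]"
    if "length x1 = ins D1" "length x2 = ins D2" "length y1 = outs D1" "length y2 = outs D2" for x1 x2 y1 y2 c
    using G that by (intro sem_ctrl_tens) auto
  show ?thesis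
    unfolding controlizes_def controlled_state_def
  proof (intro conjI allI impI)
    show "wf ?C" "ins ?C = 1" "outs ?C = ins (Tens D1 D2) + outs (Tens D1 D2)"
      using G by (simp_all add: ctrl_tens_def ctrl_pair_def tens_shuffle_io)
  next
    fix w :: "bool list"
    assume "length w = outs ?C"
    then have "length w = ins D1 + (ins D2 + (outs D1 + outs D2))"
      by (simp add: ctrl_tens_def tens_shuffle_io)
    then obtain x1 r1 where "w = x1 @ r1" "length x1 = ins D1" "length r1 = ins D2 + (outs D1 + outs D2)"
      using append_split_length by blast
    moreover obtain x2 r2 where "r1 = x2 @ r2" "length x2 = ins D2" "length r2 = outs D1 + outs D2"
      using append_split_length[OF \<open>length r1 = _\<close>] by blast
    moreover obtain y1 y2 where "r2 = y1 @ y2" "length y1 = outs D1" "length y2 = outs D2"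
      using append_split_length[OF \<open>length r2 = _\<close>] by blast
    ultimately show "sem ?C w [False] = 1"
      using split G by simp
  next
    fix x y :: "bool list"
    assume "length x = ins (Tens D1 D2)" "length y = outs (Tens D1 D2)"
    then obtain x1 x2 y1 y2 where x: "x = x1 @ x2" "length x1 = ins D1" "length x2 = ins D2"
      and y: "y = y1 @ y2" "length y1 = outs D1" "length y2 = outs D2"
      using append_split_length[of x "ins D1" "ins D2"] append_split_length[of y "outs D1" "outs D2"]
      by auto
    then have "sem ?C (x @ y) [True] =
        (ctrl_scalar (ins D1) (outs D1) * sem D1 y1 x1) * (ctrl_scalar (ins D2) (outs D2) * sem D2 y2 x2)"
      using split[OF x(2,3) y(2,3)] G by simp
    then show "sem ?C (x @ y) [True] = ctrl_scalar (ins (Tens D1 D2)) (outs (Tens D1 D2)) * sem (Tens D1 D2) y x"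
      using x y by (simp add: ctrl_scalar_add)
  qed
qed

lemma controlizes_ctrl_comp:
  assumes "controlizes G1 D1" "controlizes G3 D3" and io: "outs D1 = ins D3"
  shows "controlizes (ctrl_comp (ins D1) (outs D1) (outs D3) G1 G3) (Comp D3 D1)"
proof -
  note G = assms(1,2)[unfolded controlizes_def controlled_state_def]
  let ?C = "ctrl_comp (ins D1) (outs D1) (outs D3) G1 G3"
  have contract: "sem ?C (x @ y) [c] =
      (1 / 2) ^ outs D1 * (\<Sum>u\<in>bits (outs D1). sem G1 (x @ u) [c] * sem G3 (u @ y) [c])"
    if "length x = ins D1" "length y = outs D3" for x y c
    using G that io by (intro sem_ctrl_comp) auto
  show ?thesis
    unfolding controlizes_def controlled_state_def
  proof (intro conjI allI impI)
    show "wf ?C" "ins ?C = 1" "outs ?C = ins (Comp D3 D1) + outs (Comp D3 D1)"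
      using G io by (simp_all add: ctrl_comp_def ctrl_pair_def comp_contract_io)
  next
    fix w :: "bool list"
    assume "length w = outs ?C"
    then have "length w = ins D1 + outs D3"
      by (simp add: ctrl_comp_def comp_contract_io)
    then obtain x y where w: "w = x @ y" "length x = ins D1" "length y = outs D3"
      using append_split_length by blast
    have "(\<Sum>u\<in>bits (outs D1). sem G1 (x @ u) [False] * sem G3 (u @ y) [False]) = (\<Sum>u\<in>bits (outs D1). 1)"
      using G w io by (intro sum.cong refl) simp
    also have "\<dots> = 2 ^ outs D1"
      by (simp add: card_bits)
    finally show "sem ?C w [False] = 1"
      using contract[OF w(2,3)] w(1) by (simp add: power_one_over)
  next
    fix x y :: "bool list"
    assume x: "length x = ins (Comp D3 D1)" and y: "length y = outs (Comp D3 D1)"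
    have "(\<Sum>u\<in>bits (outs D1). sem G1 (x @ u) [True] * sem G3 (u @ y) [True]) =
        (\<Sum>u\<in>bits (outs D1). ctrl_scalar (ins D1) (outs D1) * ctrl_scalar (ins D3) (outs D3) * (sem D3 y u * sem D1 u x))"
      using G x y io by (intro sum.cong refl) simp
    also have "\<dots> = ctrl_scalar (ins D1) (outs D1) * ctrl_scalar (outs D1) (outs D3) * sem (Comp D3 D1) y x"
      using io by (simp add: sum_distrib_left)
    finally show "sem ?C (x @ y) [True] = ctrl_scalar (ins (Comp D3 D1)) (outs (Comp D3 D1)) * sem (Comp D3 D1) y x"
      using contract[of x y True] x y ctrl_scalar_contract[of "outs D1" "ins D1" "outs D3"]
      by (simp add: mult.assoc[symmetric])
  qed
qed

section \<open>Z-spiders, the swap and the controlizer\<close>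

lemma par_Had_io [simp]: "ins (par Had k) = k" "outs (par Had k) = k" "wf (par Had k)"
  using par_io[of Had k] by simp_all

lemma sem_par_Had_commute:
  "length x = k \<Longrightarrow> length y = k \<Longrightarrow> sem (par Had k) y x = sem (par Had k) x y"
  by (simp add: sem_par conj_commute)

lemma sum_par_Had:
  "(\<Sum>z\<in>bits (length y). sem (par Had (length y)) y z * s ^ nones z) =
    (\<Prod>b\<leftarrow>y. sem Had [b] [False] + sem Had [b] [True] * s)"
proof (induction y)
  case (Cons a y)
  let ?P = "sem (par Had (length y)) y"
  have "sem (par Had (Suc (length y))) (a # y) (c # z) * s ^ nones (c # z) =
      sem Had [a] [c] * (if c then s else 1) * (?P z * s ^ nones z)" for c z
    by (cases c) (simp_all add: nones_def)
  then have "(\<Sum>z\<in>bits (length (a # y)). sem (par Had (length (a # y))) (a # y) z * s ^ nones z) =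
      (\<Sum>z\<in>bits (length y). (sem Had [a] [False] + sem Had [a] [True] * s) * (?P z * s ^ nones z))"
    by (simp only: length_Cons sum_bits_Suc sum.distrib[symmetric] distrib_right if_False if_True mult_1_right)
  also have "\<dots> = (sem Had [a] [False] + sem Had [a] [True] * s) * (\<Sum>z\<in>bits (length y). ?P z * s ^ nones z)"
    by (rule sum_distrib_left[symmetric])
  finally show ?case
    by (simp only: Cons.IH list.map prod_list.Cons)
qed (simp add: nones_def)

lemma prod_list_map_if:
  "(\<Prod>b\<leftarrow>y. if P b then c else 0) = (if \<forall>b\<in>set y. P b then c ^ length y else (0 :: 'a :: comm_semiring_1))"
  by (induction y) simp_all

lemma sum_par_Had_zero:
  "(\<Sum>z\<in>bits (length y). sem (par Had (length y)) y z) =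
    (if \<forall>b\<in>set y. \<not> b then complex_of_real (sqrt 2) ^ length y else 0)"
proof -
  have "sem Had [b] [False] + sem Had [b] [True] * 1 = (if \<not> b then complex_of_real (sqrt 2) else 0)" for b
    by (cases b) (simp_all add: two_div_sqrt2 flip: add_divide_distrib)
  then show ?thesis
    using sum_par_Had[of y 1] by (simp add: prod_list_map_if)
qed

lemma sum_par_Had_sign:
  "(\<Sum>z\<in>bits (length y). sem (par Had (length y)) y z * (- 1) ^ nones z) =
    (if \<forall>b\<in>set y. b then complex_of_real (sqrt 2) ^ length y else 0)"
proof -
  have "sem Had [b] [False] + sem Had [b] [True] * - 1 = (if b then complex_of_real (sqrt 2) else 0)" for b
    by (cases b) (simp_all add: two_div_sqrt2 flip: add_divide_distrib)
  then show ?thesis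
    using sum_par_Had[of y "- 1"] by (simp add: prod_list_map_if)
qed

lemma indicator_sum_normalise:
  fixes c e R T :: complex
  assumes RT: "c * (R * T) = 1"
  shows "c * ((if P0 then R else 0) * (if Q0 then T else 0) + e * (if P1 then R else 0) * (if Q1 then T else 0))
    = (if P0 \<and> Q0 then 1 else 0) + (if P1 \<and> Q1 then e else 0)"
proof -
  have "c * (e * R * T) = e * (c * (R * T))"
    by (simp add: algebra_simps)
  then have "c * (e * R * T) = e"
    using RT by simp
  then show ?thesis
    using RT by (cases P0; cases Q0; cases P1; cases Q1) (simp_all add: distrib_left)
qed

definition zs_via_xs :: "nat \<Rightarrow> nat \<Rightarrow> real \<Rightarrow> zx" where
  "zs_via_xs n m a = Comp (par Had m) (Comp (XS n m a) (par Had n))"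

lemma zs_via_xs_io: "wf (zs_via_xs n m a)" "ins (zs_via_xs n m a) = n" "outs (zs_via_xs n m a) = m"
  by (simp_all add: zs_via_xs_def)

lemma sem_zs_via_xs:
  assumes x: "length x = n" and y: "length y = m"
  shows "sem (zs_via_xs n m a) y x = sem (ZS n m a) y x"
proof -
  define c where "c = complex_of_real ((1 / sqrt 2) ^ (n + m))"
  define e where "e = exp (\<i> * complex_of_real a)"
  define r where "r = complex_of_real (sqrt 2)"
  define S0 where "S0 = (\<Sum>u\<in>bits n. sem (par Had n) x u)"
  define S1 where "S1 = (\<Sum>u\<in>bits n. sem (par Had n) x u * (- 1) ^ nones u)"
  have inner: "(\<Sum>u\<in>bits n. sem (XS n m a) z u * sem (par Had n) u x) = c * (S0 + e * (- 1) ^ nones z * S1)" for z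
    using x by (simp add: S0_def S1_def c_def e_def sem_par_Had_commute[of _ n] power_add sum.distrib
      sum_distrib_left algebra_simps)
  have "sem (zs_via_xs n m a) y x = (\<Sum>z\<in>bits m. sem (par Had m) y z * (c * (S0 + e * (- 1) ^ nones z * S1)))"
    unfolding zs_via_xs_def by (simp add: inner del: sem.simps(2))
  also have "\<dots> = c * (S0 * (\<Sum>z\<in>bits m. sem (par Had m) y z) +
      e * S1 * (\<Sum>z\<in>bits m. sem (par Had m) y z * (- 1) ^ nones z))"
    by (simp add: sum.distrib sum_distrib_left algebra_simps)
  also have "\<dots> = c * ((if \<forall>b\<in>set y. \<not> b then r ^ m else 0) * (if \<forall>b\<in>set x. \<not> b then r ^ n else 0) +
      e * (if \<forall>b\<in>set y. b then r ^ m else 0) * (if \<forall>b\<in>set x. b then r ^ n else 0))"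
  proof -
    have "S0 = (if \<forall>b\<in>set x. \<not> b then r ^ n else 0)" "S1 = (if \<forall>b\<in>set x. b then r ^ n else 0)"
      "(\<Sum>z\<in>bits m. sem (par Had m) y z) = (if \<forall>b\<in>set y. \<not> b then r ^ m else 0)"
      "(\<Sum>z\<in>bits m. sem (par Had m) y z * (- 1) ^ nones z) = (if \<forall>b\<in>set y. b then r ^ m else 0)"
      using x y sum_par_Had_zero[of x] sum_par_Had_sign[of x] sum_par_Had_zero[of y] sum_par_Had_sign[of y]
      by (simp_all only: S0_def S1_def r_def)
    then show ?thesis
      by (simp only: ac_simps)
  qed
  also have "\<dots> = sem (ZS n m a) y x"
  proof -
    have normalised: "c * (r ^ m * r ^ n) = 1"
      unfolding c_def r_def by (simp add: power_add[symmetric] power_one_over add.commute)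
    show ?thesis
      unfolding indicator_sum_normalise[OF normalised] by (simp only: sem.simps(1) e_def)
  qed
  finally show ?thesis .
qed

lemma controlizes_Swap:
  assumes G: "controlizes G (Tens Wire Wire)"
  shows "controlizes (Comp (Tens (wires 2) Swap) G) Swap"
proof -
  let ?P = "Tens (wires 2) Swap"
  let ?g = "\<lambda>w. id (take (ins (wires 2)) w) @ rev (drop (ins (wires 2)) w)"
  have P: "perm_diagram ?P ?g"
    by (intro perm_diagram_Tens perm_diagram_wires perm_diagram_Swap)
  note G' = G[unfolded controlizes_def controlled_state_def]
  have sem_P_G: "sem (Comp ?P G) w c = sem G (?g w) c" if "length w = 4" for w c
    using G' that by (intro sem_Comp_perm_left[OF P]) auto
  show ?thesis
    unfolding controlizes_def controlled_state_def
  proof (intro conjI allI impI)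
    show "wf (Comp ?P G)" "ins (Comp ?P G) = 1" "outs (Comp ?P G) = ins Swap + outs Swap"
      using G' by simp_all
  next
    fix w :: "bool list"
    assume "length w = outs (Comp ?P G)"
    then show "sem (Comp ?P G) w [False] = 1"
      using G' sem_P_G by (simp del: sem.simps(9))
  next
    fix x y :: "bool list"
    assume "length x = ins Swap" "length y = outs Swap"
    then obtain a b c d where xy: "x = [a, b]" "y = [c, d]"
      by (auto simp: length_Suc_conv numeral_2_eq_2)
    have "sem (Comp ?P G) (x @ y) [True] = sem G ([a, b] @ [d, c]) [True]"
      using sem_P_G[of "x @ y"] xy by (simp del: sem.simps(9))
    also have "\<dots> = ctrl_scalar 2 2 * sem (Tens Wire Wire) [d, c] [a, b]"
      using controlizes_sem[OF G, of "[a, b]" "[d, c]"] by (simp add: numeral_2_eq_2)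
    finally show "sem (Comp ?P G) (x @ y) [True] = ctrl_scalar (ins Swap) (outs Swap) * sem Swap y x"
      using xy by auto
  qed
qed

fun ctrl_by :: "(zx \<Rightarrow> zx) \<Rightarrow> zx \<Rightarrow> zx" where
  "ctrl_by leaf (Tens D1 D2) =
     ctrl_tens (ins D1) (outs D1) (ins D2) (outs D2) (ctrl_by leaf D1) (ctrl_by leaf D2)"
| "ctrl_by leaf (Comp D3 D1) = ctrl_comp (ins D1) (outs D1) (outs D3) (ctrl_by leaf D1) (ctrl_by leaf D3)"
| "ctrl_by leaf D = leaf D"

fun leaves :: "zx \<Rightarrow> zx set" where
  "leaves (Tens D1 D2) = leaves D1 \<union> leaves D2"
| "leaves (Comp D1 D2) = leaves D1 \<union> leaves D2"
| "leaves D = {D}"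

lemma controlizes_ctrl_by:
  "wf D \<Longrightarrow> \<forall>g\<in>leaves D. controlizes (leaf g) g \<Longrightarrow> controlizes (ctrl_by leaf D) D"
proof (induction D)
  case (Comp D3 D1)
  then show ?case
    using controlizes_ctrl_comp[of "ctrl_by leaf D1" D1 "ctrl_by leaf D3" D3] by simp
next
  case (Tens D1 D2)
  then show ?case
    using controlizes_ctrl_tens[of "ctrl_by leaf D1" D1 "ctrl_by leaf D2" D2] by simp
qed simp_all

lemma leaves_par_Had: "leaves (par Had k) \<subseteq> {Had, Emp}"
  by (induction k) auto

definition ctrl_zs :: "nat \<Rightarrow> nat \<Rightarrow> real \<Rightarrow> zx" where
  "ctrl_zs n m a =
     ctrl_by (\<lambda>D. if D = Had then ctrl_had else if D = Emp then ZS 1 0 0 else ctrl_xs (n + m) a) (zs_via_xs n m a)"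

lemma controlizes_ctrl_zs: "controlizes (ctrl_zs n m a) (ZS n m a)"
proof -
  let ?leaf = "\<lambda>D. if D = Had then ctrl_had else if D = Emp then ZS 1 0 0 else ctrl_xs (n + m) a"
  have "leaves (zs_via_xs n m a) \<subseteq> {Had, Emp, XS n m a}"
    using leaves_par_Had by (auto simp: zs_via_xs_def)
  then have "\<forall>g\<in>leaves (zs_via_xs n m a). controlizes (?leaf g) g"
    using controlizes_ctrl_had controlizes_Emp controlizes_ctrl_xs by auto
  then have "controlizes (ctrl_zs n m a) (zs_via_xs n m a)"
    unfolding ctrl_zs_def by (intro controlizes_ctrl_by zs_via_xs_io)
  then show ?thesis
    by (rule controlizes_cong) (simp_all add: zs_via_xs_io sem_zs_via_xs)
qed

definition ctrl_swap :: zx where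
  "ctrl_swap = Comp (Tens (wires 2) Swap) (ctrl_tens 1 1 1 1 (ctrl_xs 2 0) (ctrl_xs 2 0))"

lemma controlizes_ctrl_swap: "controlizes ctrl_swap Swap"
proof -
  have "controlizes (ctrl_tens 1 1 1 1 (ctrl_xs 2 0) (ctrl_xs 2 0)) (Tens Wire Wire)"
    using controlizes_ctrl_tens[OF controlizes_Wire controlizes_Wire] by simp
  then show ?thesis
    unfolding ctrl_swap_def by (rule controlizes_Swap)
qed

fun gen_ctrl :: "zx \<Rightarrow> zx" where
  "gen_ctrl (ZS n m a) = ctrl_zs n m a"
| "gen_ctrl (XS n m a) = ctrl_xs (n + m) a"
| "gen_ctrl Had = ctrl_had"
| "gen_ctrl Wire = ctrl_xs 2 0"
| "gen_ctrl Swap = ctrl_swap"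
| "gen_ctrl Cup = ctrl_xs 2 0"
| "gen_ctrl Cap = ctrl_xs 2 0"
| "gen_ctrl Emp = ZS 1 0 0"

lemma controlizes_gen_ctrl: "\<forall>g\<in>leaves D. controlizes (gen_ctrl g) g"
  by (induction D) (auto simp: controlizes_ctrl_zs controlizes_ctrl_xs controlizes_ctrl_had controlizes_Wire
    controlizes_ctrl_swap controlizes_Cup controlizes_Cap controlizes_Emp[simplified])

theorem lemma3p1:
  shows "\<exists>(C :: zx \<Rightarrow> zx) (lam :: nat \<Rightarrow> nat \<Rightarrow> complex).
    (\<forall>n m. lam n m \<noteq> 0) \<and>
    (\<forall>D. wf D \<longrightarrow>
       wf (C D) \<and> ins (C D) = 1 \<and> outs (C D) = ins D + outs D \<and>
       controlled_state (C D) \<and>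
       (\<forall>x y. length x = ins D \<longrightarrow> length y = outs D \<longrightarrow>
          sem (C D) (x @ y) [True] = lam (ins D) (outs D) * sem D y x)) \<and>
    (\<exists>(TA :: nat \<Rightarrow> nat \<Rightarrow> nat \<Rightarrow> nat \<Rightarrow> zx) (TB :: nat \<Rightarrow> nat \<Rightarrow> nat \<Rightarrow> nat \<Rightarrow> zx)
       (TR :: nat \<Rightarrow> nat \<Rightarrow> nat \<Rightarrow> nat \<Rightarrow> nat).
       \<forall>D1 D2. wf D1 \<longrightarrow> wf D2 \<longrightarrow>
         C (Tens D1 D2) =
           Comp (TA (ins D1) (outs D1) (ins D2) (outs D2))
             (Comp (Tens (Tens (C D1) (C D2)) (wires (TR (ins D1) (outs D1) (ins D2) (outs D2))))
                   (TB (ins D1) (outs D1) (ins D2) (outs D2)))) \<and>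
    (\<exists>(SA :: nat \<Rightarrow> nat \<Rightarrow> nat \<Rightarrow> zx) (SB :: nat \<Rightarrow> nat \<Rightarrow> nat \<Rightarrow> zx)
       (SR :: nat \<Rightarrow> nat \<Rightarrow> nat \<Rightarrow> nat).
       \<forall>D1 D3. wf D1 \<longrightarrow> wf D3 \<longrightarrow> outs D1 = ins D3 \<longrightarrow>
         C (Comp D3 D1) =
           Comp (SA (ins D1) (outs D1) (outs D3))
             (Comp (Tens (Tens (C D1) (C D3)) (wires (SR (ins D1) (outs D1) (outs D3))))
                   (SB (ins D1) (outs D1) (outs D3))))"
proof (intro exI conjI allI impI)
  show "ctrl_scalar n m \<noteq> 0" for n m
    by (simp add: ctrl_scalar_def)
  fix D
  assume "wf D"
  then have C: "controlizes (ctrl_by gen_ctrl D) D"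
    using controlizes_ctrl_by controlizes_gen_ctrl by blast
  then show "wf (ctrl_by gen_ctrl D)" "ins (ctrl_by gen_ctrl D) = 1"
    "outs (ctrl_by gen_ctrl D) = ins D + outs D" "controlled_state (ctrl_by gen_ctrl D)"
    by (simp_all add: controlizes_def controlled_state_def)
  fix x y :: "bool list"
  assume "length x = ins D" "length y = outs D"
  then show "sem (ctrl_by gen_ctrl D) (x @ y) [True] = ctrl_scalar (ins D) (outs D) * sem D y x"
    by (rule controlizes_sem[OF C])
next
  fix D1 D2 :: zx
  show "ctrl_by gen_ctrl (Tens D1 D2) =
    Comp (tens_shuffle (ins D1) (outs D1) (ins D2) (outs D2))
      (Comp (Tens (Tens (ctrl_by gen_ctrl D1) (ctrl_by gen_ctrl D2)) (wires ((\<lambda>_ _ _ _. 0) (ins D1) (outs D1) (ins D2) (outs D2))))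
        ((\<lambda>_ _ _ _. ZS 1 2 0) (ins D1) (outs D1) (ins D2) (outs D2)))"
    by (simp add: ctrl_tens_def ctrl_pair_def)
next
  fix D1 D3 :: zx
  show "ctrl_by gen_ctrl (Comp D3 D1) =
    Comp (comp_contract (ins D1) (outs D1) (outs D3))
      (Comp (Tens (Tens (ctrl_by gen_ctrl D1) (ctrl_by gen_ctrl D3)) (wires ((\<lambda>_ _ _. 0) (ins D1) (outs D1) (outs D3))))
        ((\<lambda>_ _ _. ZS 1 2 0) (ins D1) (outs D1) (outs D3)))"
    by (simp add: ctrl_comp_def ctrl_pair_def)
qed

end
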